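(* Let $W$ be a weak $V$-module, $z$ a nonzero complex number and $\alpha\in W^*$. The following are equivalent: (a) $\alpha\in\mathcal D_{P(z)}(W)$; (b) for each $v\in V$ there exist $l,k\in\mathbb N$ such that for every $w\in W$, $x^l(x-z)^k\langle\alpha,Y^o(v,x)w\rangle$ is a polynomial in $x$; (c) for each $v\in V$ there exist $l,k\in\mathbb N$ such that $x^l(x-z)^kY^*(v,x)\alpha\in W^*[[x]]$; (d) for each $v\in V$ there exists $k\in\mathbb N$ such that $(x-z)^kY^*(v,x)\alpha\in W^*((x))$.
   Context: $V$ is a vertex operator algebra with vacuum $\mathbf 1$, Virasoro element $\omega$, $Y(\omega,x)=\sum_{n}L(n)x^{-n-2}$, and $V=\coprod_{n\in\mathbb Z}V_{(n)}$ graded by $L(0)$-eigenvalues. The formal delta function is $\delta(x)=\sum_{n\in\mathbb Z}x^n$; binomial expressions $(x_1-x_2)^n$ are expanded in nonnegative powers of the second variable. A weak $V$-module is a vector space $W$ with a linear map $Y_W:V\to(\mathrm{End}\,W)[[x,x^{-1}]]$ such that $Y_W(v,x)w\in W((x))$, $Y_W(\mathbf 1,x)=\mathrm{id}_W$, and the Jacobi identity $x_0^{-1}\delta(\frac{x_1-x_2}{x_0})Y_W(u,x_1)Y_W(v,x_2)-x_0^{-1}\delta(\frac{x_2-x_1}{-x_0})Y_W(v,x_2)Y_W(u,x_1)=x_2^{-1}\delta(\frac{x_1-x_0}{x_2})Y_W(Y(u,x_0)v,x_2)$ holds. For $v\in V$ set $Y^o(v,x)=Y_W(e^{xL(1)}(-x^{-2})^{L(0)}v,x^{-1})$;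 then $Y^o(v,x)w\in W((x^{-1}))$. For $\alpha\in W^*$ define $Y^*(v,x)\alpha=\sum_{n\in\mathbb Z}v^*_n\alpha\,x^{-n-1}\in W^*[[x,x^{-1}]]$ by $\langle Y^*(v,x)\alpha,w\rangle=\langle\alpha,Y^o(v,x)w\rangle$ for $w\in W$. For a nonzero complex number $z$, $\alpha\in W^*$ is a $P(z)$-linear functional if for all $v\in V,w\in W$ the series $\langle\alpha,Y^o(v,x)w\rangle$ converges absolutely in $|x|>|z|$ to a rational function in $\mathbb C[x,x^{-1},(x-z)^{-1}]$, and for each fixed $v$ the orders of the poles at $0$ and at $z$ of these rational functions are bounded independently of $w$. $\mathcal D_{P(z)}(W)$ is the space of $P(z)$-linear functionals on $W$. *)

theory Defs
  imports "HOL-Analysis.Analysis" "HOL-Computational_Algebra.Polynomial"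
begin

text \<open>
  Vertex operators are given by their modes:  Y u n v = u_n v, so that
  Y(u,x) = sum_n u_n x^(-n-1).  A formal series in x (doubly infinite) with
  coefficients in A is represented by its coefficient function int => A,
  where f p is the coefficient of x^p.
\<close>

definition fsum :: "('i \<Rightarrow> 'a::comm_monoid_add) \<Rightarrow> 'a" where
  "fsum f = sum f {i. f i \<noteq> 0}"
  \<comment> \<open>sum of a finitely supported family (used for sums over i >= 0 that are finite by truncation)\<close>

text \<open>Jacobi identity, written out coefficientwise (coefficient of
  x0^(-l-1) x1^(-m-1) x2^(-n-1)):
  sum_(i>=0) binom(m,i) (u_(l+i) v)_(m+n-i) w
  = sum_(i>=0) (-1)^i binom(l,i) (u_(l+m-i) v_(n+i) w - (-1)^l v_(l+n-i) u_(m+i) w).\<close>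
definition jacobi_component ::
  "(complex \<Rightarrow> 'w \<Rightarrow> 'w::ab_group_add) \<Rightarrow> ('v \<Rightarrow> int \<Rightarrow> 'v \<Rightarrow> 'v)
   \<Rightarrow> ('v \<Rightarrow> int \<Rightarrow> 'w \<Rightarrow> 'w) \<Rightarrow> 'v \<Rightarrow> 'v \<Rightarrow> 'w \<Rightarrow> int \<Rightarrow> int \<Rightarrow> int \<Rightarrow> bool" where
  "jacobi_component sW Y YW u v w m n l \<longleftrightarrow>
     fsum (\<lambda>i::nat. sW (of_int m gchoose i) (YW (Y u (l + int i) v) (m + n - int i) w))
   = fsum (\<lambda>i::nat. sW ((-1) ^ i * (of_int l gchoose i))
            (YW u (l + m - int i) (YW v (n + int i) w)
             - sW ((-1) powi l) (YW v (l + n - int i) (YW u (m + int i) w))))"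

text \<open>Virasoro operators L(n) = omega_(n+1), since Y(omega,x) = sum L(n) x^(-n-2).\<close>
definition Lop :: "('v \<Rightarrow> int \<Rightarrow> 'v \<Rightarrow> 'v) \<Rightarrow> 'v \<Rightarrow> int \<Rightarrow> 'v \<Rightarrow> 'v" where
  "Lop Y om n = Y om (n + 1)"

definition hom_space :: "(complex \<Rightarrow> 'v \<Rightarrow> 'v) \<Rightarrow> ('v \<Rightarrow> int \<Rightarrow> 'v \<Rightarrow> 'v) \<Rightarrow> 'v \<Rightarrow> int \<Rightarrow> 'v set" where
  "hom_space sV Y om n = {v. Lop Y om 0 v = sV (of_int n) v}"

definition is_VOA ::
  "(complex \<Rightarrow> 'v \<Rightarrow> 'v::ab_group_add) \<Rightarrow> ('v \<Rightarrow> int \<Rightarrow> 'v \<Rightarrow> 'v) \<Rightarrow> 'v \<Rightarrow> 'v \<Rightarrow> bool" where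
  "is_VOA sV Y vac om \<longleftrightarrow>
     vector_space sV
   \<comment> \<open>Y : V \<otimes> V \<rightarrow> V[[x,x^-1]] bilinear\<close>
   \<and> (\<forall>u n. Vector_Spaces.linear sV sV (Y u n))
   \<and> (\<forall>n v. Vector_Spaces.linear sV sV (\<lambda>u. Y u n v))
   \<comment> \<open>grading V = \<coprod>_n V_(n) by L(0)-eigenvalues\<close>
   \<and> (\<forall>v. \<exists>c::int \<Rightarrow> 'v. finite {n. c n \<noteq> 0} \<and> (\<forall>n. c n \<in> hom_space sV Y om n)
            \<and> v = sum c {n. c n \<noteq> 0})
   \<and> (\<forall>n. \<exists>B. finite B \<and> hom_space sV Y om n \<subseteq> module.span sV B)
   \<and> (\<exists>N. \<forall>n<N. hom_space sV Y om n = {0})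
   \<comment> \<open>truncation: Y(u,x)v \<in> V((x))\<close>
   \<and> (\<forall>u v. \<exists>N. \<forall>n>N. Y u n v = 0)
   \<comment> \<open>vacuum property Y(1,x) = id\<close>
   \<and> (\<forall>n v. Y vac n v = (if n = -1 then v else 0))
   \<comment> \<open>creation property Y(v,x)1 \<in> V[[x]], Y(v,x)1|_(x=0) = v\<close>
   \<and> (\<forall>v. (\<forall>n\<ge>0. Y v n vac = 0) \<and> Y v (-1) vac = v)
   \<comment> \<open>Jacobi identity\<close>
   \<and> (\<forall>u v w m n l. jacobi_component sV Y Y u v w m n l)
   \<comment> \<open>Virasoro relations with some central charge c\<close>
   \<and> (\<exists>c::complex. \<forall>m n v.
        Lop Y om m (Lop Y om n v) - Lop Y om n (Lop Y om m v)
        = sV (of_int (m - n)) (Lop Y om (m + n) v)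
          + (if m + n = 0 then sV ((of_int m ^ 3 - of_int m) / 12 * c) v else 0))
   \<and> vac \<in> hom_space sV Y om 0 \<and> om \<in> hom_space sV Y om 2
   \<comment> \<open>L(-1)-derivative property: Y(L(-1)v,x) = d/dx Y(v,x)\<close>
   \<and> (\<forall>v n u. Y (Lop Y om (-1) v) n u = sV (- of_int n) (Y v (n - 1) u))"

definition is_weak_module ::
  "(complex \<Rightarrow> 'v \<Rightarrow> 'v::ab_group_add) \<Rightarrow> ('v \<Rightarrow> int \<Rightarrow> 'v \<Rightarrow> 'v) \<Rightarrow> 'v \<Rightarrow>
   (complex \<Rightarrow> 'w \<Rightarrow> 'w::ab_group_add) \<Rightarrow> ('v \<Rightarrow> int \<Rightarrow> 'w \<Rightarrow> 'w) \<Rightarrow> bool" where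
  "is_weak_module sV Y vac sW YW \<longleftrightarrow>
     vector_space sW
   \<and> (\<forall>v n. Vector_Spaces.linear sW sW (YW v n))
   \<and> (\<forall>n w. Vector_Spaces.linear sV sW (\<lambda>v. YW v n w))
   \<and> (\<forall>v w. \<exists>N. \<forall>n>N. YW v n w = 0)
   \<and> (\<forall>n w. YW vac n w = (if n = -1 then w else 0))
   \<and> (\<forall>u v w m n l. jacobi_component sW Y YW u v w m n l)"

definition hom_comp :: "(complex \<Rightarrow> 'v \<Rightarrow> 'v::ab_group_add) \<Rightarrow> ('v \<Rightarrow> int \<Rightarrow> 'v \<Rightarrow> 'v) \<Rightarrow> 'v \<Rightarrow> 'v \<Rightarrow> int \<Rightarrow> 'v" where
  "hom_comp sV Y om v = (THE c. finite {n. c n \<noteq> 0} \<and> (\<forall>n. c n \<in> hom_space sV Y om n)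
                               \<and> v = sum c {n. c n \<noteq> 0})"

text \<open>Coefficient of x^p in Y^o(v,x) w = Y_W(e^(x L(1)) (-x^(-2))^L(0) v, x^(-1)) w.
  For v of weight n, e^(xL(1))(-x^(-2))^L(0) v = sum_j (-1)^n x^(j-2n)/j! L(1)^j v and
  Y_W(u,x^(-1)) = sum_m u_m x^(m+1); so the coefficient of x^p is
  sum_n sum_j (-1)^n / j! (L(1)^j v_(n))_(p+2n-j-1) w.\<close>
definition Yo :: "(complex \<Rightarrow> 'v \<Rightarrow> 'v::ab_group_add) \<Rightarrow> ('v \<Rightarrow> int \<Rightarrow> 'v \<Rightarrow> 'v) \<Rightarrow> 'v \<Rightarrow>
   (complex \<Rightarrow> 'w \<Rightarrow> 'w::ab_group_add) \<Rightarrow> ('v \<Rightarrow> int \<Rightarrow> 'w \<Rightarrow> 'w) \<Rightarrow> 'v \<Rightarrow> int \<Rightarrow> 'w \<Rightarrow> 'w" where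
  "Yo sV Y om sW YW v p w =
     fsum (\<lambda>n::int. fsum (\<lambda>j::nat.
        sW ((-1) powi n / of_nat (fact j))
           (YW ((Lop Y om 1 ^^ j) (hom_comp sV Y om v n)) (p + 2 * n - int j - 1) w)))"

definition Ystar :: "(complex \<Rightarrow> 'v \<Rightarrow> 'v::ab_group_add) \<Rightarrow> ('v \<Rightarrow> int \<Rightarrow> 'v \<Rightarrow> 'v) \<Rightarrow> 'v \<Rightarrow>
   (complex \<Rightarrow> 'w \<Rightarrow> 'w::ab_group_add) \<Rightarrow> ('v \<Rightarrow> int \<Rightarrow> 'w \<Rightarrow> 'w) \<Rightarrow> 'v \<Rightarrow> ('w \<Rightarrow> complex) \<Rightarrow> int \<Rightarrow> ('w \<Rightarrow> complex)" where
  "Ystar sV Y om sW YW v \<alpha> p = (\<lambda>w. \<alpha> (Yo sV Y om sW YW v p w))"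

text \<open>Coefficients of x^l (x-z)^k f(x) for a formal series f with complex coefficients,
  using (x-z)^k = sum_i binom(k,i) (-z)^(k-i) x^i.\<close>
definition pmul_series :: "nat \<Rightarrow> nat \<Rightarrow> complex \<Rightarrow> (int \<Rightarrow> complex) \<Rightarrow> int \<Rightarrow> complex" where
  "pmul_series l k z f p = (\<Sum>i\<le>k. of_nat (k choose i) * (-z) ^ (k - i) * f (p - int l - int i))"

definition pmul_dual :: "nat \<Rightarrow> nat \<Rightarrow> complex \<Rightarrow> (int \<Rightarrow> 'w \<Rightarrow> complex) \<Rightarrow> int \<Rightarrow> 'w \<Rightarrow> complex" where
  "pmul_dual l k z F p = (\<lambda>w. pmul_series l k z (\<lambda>q. F q w) p)"

definition is_polynomial_series :: "(int \<Rightarrow> complex) \<Rightarrow> bool" where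
  "is_polynomial_series f \<longleftrightarrow> (\<forall>p<0. f p = 0) \<and> finite {p. f p \<noteq> 0}"

definition rat_0z :: "complex \<Rightarrow> (complex \<Rightarrow> complex) \<Rightarrow> bool" where
  "rat_0z z R \<longleftrightarrow> (\<exists>q a b. \<forall>x. x \<noteq> 0 \<and> x \<noteq> z \<longrightarrow> R x = poly q x / (x ^ a * (x - z) ^ b))"

text \<open>The order of the pole of R at c is at most m (no pole counts as order 0):
  (x-c)^m R(x) has a finite limit as x \<rightarrow> c.\<close>
definition pole_order_le :: "(complex \<Rightarrow> complex) \<Rightarrow> complex \<Rightarrow> nat \<Rightarrow> bool" where
  "pole_order_le R c m \<longleftrightarrow> (\<exists>L. ((\<lambda>x. (x - c) ^ m * R x) \<longlongrightarrow> L) (at c))"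

definition conv_abs_to :: "complex \<Rightarrow> (int \<Rightarrow> complex) \<Rightarrow> (complex \<Rightarrow> complex) \<Rightarrow> bool" where
  "conv_abs_to z f R \<longleftrightarrow> (\<forall>x. norm x > norm z \<longrightarrow>
      (\<lambda>p. norm (f p * x powi p)) summable_on UNIV \<and> ((\<lambda>p. f p * x powi p) has_sum R x) UNIV)"

definition is_Pz_linear ::
  "(complex \<Rightarrow> 'v \<Rightarrow> 'v::ab_group_add) \<Rightarrow> ('v \<Rightarrow> int \<Rightarrow> 'v \<Rightarrow> 'v) \<Rightarrow> 'v \<Rightarrow>
   (complex \<Rightarrow> 'w \<Rightarrow> 'w::ab_group_add) \<Rightarrow> ('v \<Rightarrow> int \<Rightarrow> 'w \<Rightarrow> 'w) \<Rightarrow> complex \<Rightarrow> ('w \<Rightarrow> complex) \<Rightarrow> bool" where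
  "is_Pz_linear sV Y om sW YW z \<alpha> \<longleftrightarrow>
     Vector_Spaces.linear sW (*) \<alpha>
   \<and> (\<forall>v. \<exists>A B. \<forall>w. \<exists>R.
        conv_abs_to z (\<lambda>p. \<alpha> (Yo sV Y om sW YW v p w)) R
        \<and> rat_0z z R \<and> pole_order_le R 0 A \<and> pole_order_le R z B)"

end

theory Submission
  imports Defs
begin

text \<open>For fixed v and w the series \<langle>\<alpha>, Y^o(v,x) w\<rangle> has only finitely many positive powers
  of x, because the grading of V is bounded below and L(1) lowers weights. For such a series f,
  absolute convergence for |x| > |z| to a rational function with poles of order at most l at 0
  and k at z is equivalent to x^l (x - z)^k f being a polynomial: one direction is uniqueness of
  expansions at infinity, the other is that dividing a polynomial by x^l (x - z)^k keeps absolute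
  convergence for |x| > |z|. As x^l (x - z)^k f also has finitely many positive powers, it is a
  polynomial iff its negative coefficients vanish, and the factor x^l merely shifts degrees.\<close>

section \<open>Laurent series with finitely many positive powers\<close>

lemma has_sum_sum:
  fixes g :: "'i \<Rightarrow> 'a \<Rightarrow> 'b::topological_comm_monoid_add"
  assumes "finite I" "\<And>i. i \<in> I \<Longrightarrow> (g i has_sum s i) A"
  shows "((\<lambda>x. \<Sum>i\<in>I. g i x) has_sum (\<Sum>i\<in>I. s i)) A"
  using assms by (induction I rule: finite_induct) (simp_all add: has_sum_add)

lemma summable_on_sum:
  fixes g :: "'i \<Rightarrow> 'a \<Rightarrow> 'b::{topological_comm_monoid_add,t2_space}"
  assumes "finite I" "\<And>i. i \<in> I \<Longrightarrow> g i summable_on A"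
  shows "(\<lambda>x. \<Sum>i\<in>I. g i x) summable_on A"
  using assms by (induction I rule: finite_induct) (simp_all add: summable_on_add)

lemma has_sum_laurent_shift:
  fixes f :: "int \<Rightarrow> complex"
  assumes "((\<lambda>p. f p * x powi p) has_sum S) UNIV" "x \<noteq> 0"
  shows "((\<lambda>p. f (p - d) * x powi p) has_sum (x powi d * S)) UNIV"
proof -
  have "((\<lambda>p. f (p - d) * x powi (p - d)) has_sum S) UNIV"
    using has_sum_reindex_bij_witness[of UNIV "\<lambda>p. p + d" "\<lambda>p. p - d" UNIV
        "\<lambda>p. f p * x powi p" "\<lambda>p. f (p - d) * x powi (p - d)" S S] assms(1) by simp
  from has_sum_cmult_right[OF this, of "x powi d"] show ?thesis
    using assms(2) by (simp add: power_int_diff field_simps)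
qed

lemma abs_summable_laurent_shift:
  fixes f :: "int \<Rightarrow> complex"
  assumes "(\<lambda>p. norm (f p * x powi p)) summable_on UNIV" "x \<noteq> 0"
  shows "(\<lambda>p. norm (f (p - d) * x powi p)) summable_on UNIV"
proof -
  have "(\<lambda>p. norm (f (p - d) * x powi (p - d))) summable_on UNIV"
    using summable_on_reindex_bij_witness[of UNIV "\<lambda>p. p + d" "\<lambda>p. p - d" UNIV
        "\<lambda>p. norm (f p * x powi p)" "\<lambda>p. norm (f (p - d) * x powi (p - d))"] assms(1) by simp
  from summable_on_cmult_right[OF this, of "norm (x powi d)"] show ?thesis
    using assms(2) by (simp add: power_int_diff field_simps norm_mult norm_divide)
qed

lemma pmul_series_shift: "pmul_series l k z f p = pmul_series 0 k z f (p - int l)"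
  by (simp add: pmul_series_def algebra_simps)

lemma pmul_series_0_0 [simp]: "pmul_series 0 0 z f = f"
  by (simp add: pmul_series_def fun_eq_iff)

lemma pmul_series_Suc:
  "pmul_series 0 (Suc k) z f p = - z * pmul_series 0 k z f p + pmul_series 0 k z f (p - 1)"
proof -
  define a where "a i = (-z) ^ (Suc k - i) * f (p - int i)" for i
  have "a 0 + (\<Sum>i\<le>k. of_nat (k choose Suc i) * a (Suc i))
      = (\<Sum>i\<le>k. of_nat (k choose i) * a i)"
    using sum.atMost_Suc_shift[of "\<lambda>i. of_nat (k choose i) * a i" k] by (simp add: binomial_eq_0)
  then have "(\<Sum>i\<le>Suc k. of_nat (Suc k choose i) * a i)
      = (\<Sum>i\<le>k. of_nat (k choose i) * a i) + (\<Sum>i\<le>k. of_nat (k choose i) * a (Suc i))"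
    by (simp only: sum.atMost_Suc_shift binomial_Suc_Suc) (simp add: sum.distrib algebra_simps)
  then show ?thesis
    by (simp add: pmul_series_def a_def sum_distrib_left Suc_diff_le algebra_simps)
qed

lemma pmul_series_eq_0_above:
  assumes "\<And>p. p > P \<Longrightarrow> f p = 0" "p > P + int l + int k"
  shows "pmul_series l k z f p = 0"
  unfolding pmul_series_def using assms by (intro sum.neutral) auto

lemma pmul_series_times_powi:
  "pmul_series l k z f p * x powi p =
   (\<Sum>i\<le>k. (of_nat (k choose i) * (-z) ^ (k - i)) * (f (p - int (l + i)) * x powi p))"
  unfolding pmul_series_def sum_distrib_right by (rule sum.cong) (auto simp: algebra_simps)

lemma has_sum_pmul_series:
  fixes f :: "int \<Rightarrow> complex"
  assumes "((\<lambda>p. f p * x powi p) has_sum S) UNIV" "x \<noteq> 0"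
  shows "((\<lambda>p. pmul_series l k z f p * x powi p) has_sum (x ^ l * (x - z) ^ k * S)) UNIV"
proof -
  have "((\<lambda>p. pmul_series l k z f p * x powi p)
     has_sum (\<Sum>i\<le>k. (of_nat (k choose i) * (-z) ^ (k - i)) * (x powi int (l + i) * S))) UNIV"
    unfolding pmul_series_times_powi
    by (intro has_sum_sum has_sum_cmult_right has_sum_laurent_shift assms) auto
  also have "(\<Sum>i\<le>k. (of_nat (k choose i) * (-z) ^ (k - i)) * (x powi int (l + i) * S))
      = x ^ l * S * (\<Sum>i\<le>k. of_nat (k choose i) * x ^ i * (-z) ^ (k - i))"
    by (simp only: power_int_of_nat) (simp add: sum_distrib_left power_add algebra_simps)
  also have "\<dots> = x ^ l * (x - z) ^ k * S"
    by (simp add: binomial_ring[of x "-z" k, symmetric])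
  finally show ?thesis .
qed

lemma abs_summable_pmul_series:
  fixes f :: "int \<Rightarrow> complex"
  assumes "(\<lambda>p. norm (f p * x powi p)) summable_on UNIV" "x \<noteq> 0"
  shows "(\<lambda>p. norm (pmul_series l k z f p * x powi p)) summable_on UNIV"
proof (rule summable_on_comparison_test)
  show "(\<lambda>p. \<Sum>i\<le>k. norm (of_nat (k choose i) * (-z) ^ (k - i)) * norm (f (p - int (l + i)) * x powi p))
      summable_on UNIV"
    by (intro summable_on_sum summable_on_cmult_right abs_summable_laurent_shift assms) auto
  show "norm (pmul_series l k z f p * x powi p) \<le>
     (\<Sum>i\<le>k. norm (of_nat (k choose i) * (-z) ^ (k - i)) * norm (f (p - int (l + i)) * x powi p))" for p
    unfolding pmul_series_times_powi by (rule order_trans[OF norm_sum]) (simp add: norm_mult)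
qed simp

section \<open>Division by x - z\<close>

lemma summable_on_if_recurrence_bound:
  fixes a b :: "int \<Rightarrow> real"
  assumes a_nonneg: "\<And>p. 0 \<le> a p" and b_nonneg: "\<And>p. 0 \<le> b p" and b: "b summable_on UNIV"
    and \<rho>: "0 \<le> \<rho>" "\<rho> < 1"
    and above: "\<And>p. p > P \<Longrightarrow> a p = 0"
    and recurrence: "\<And>p. a p \<le> b (p + 1) + \<rho> * a (p + 1)"
  shows "a summable_on UNIV"
proof (rule nonneg_bdd_above_summable_on)
  define G where "G = infsum b UNIV"
  have interval_bound: "sum a {m..P} \<le> G / (1 - \<rho>)" for m
  proof -
    have shift: "(\<Sum>p\<in>{m..P}. h (p + 1)) = sum h {m+1..P+1}" for h :: "int \<Rightarrow> real"
      by (rule sum.reindex_bij_witness[of _ "\<lambda>q. q - 1" "\<lambda>p. p + 1"]) auto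
    have "sum a {m+1..P+1} \<le> sum a {m..P+1}"
      by (intro sum_mono2) (auto simp: a_nonneg)
    also have "\<dots> = sum a {m..P}"
      by (intro sum.mono_neutral_right) (auto simp: above)
    finally have a_shift: "sum a {m+1..P+1} \<le> sum a {m..P}" .
    have "sum a {m..P} \<le> (\<Sum>p\<in>{m..P}. b (p + 1) + \<rho> * a (p + 1))"
      by (intro sum_mono recurrence)
    also have "\<dots> = sum b {m+1..P+1} + \<rho> * sum a {m+1..P+1}"
      by (simp add: sum.distrib shift flip: sum_distrib_left)
    also have "\<dots> \<le> G + \<rho> * sum a {m..P}"
      unfolding G_def using b b_nonneg \<rho> a_shift
      by (intro add_mono finite_sum_le_infsum mult_left_mono) auto
    finally show ?thesis
      using \<rho> by (simp add: field_simps)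
  qed
  show "bdd_above (sum a ` {F. F \<subseteq> UNIV \<and> finite F})"
  proof (rule bdd_aboveI2)
    fix F :: "int set" assume "F \<in> {F. F \<subseteq> UNIV \<and> finite F}"
    then have F: "finite F" by simp
    define m where "m = Min (insert P F)"
    have "sum a F \<le> sum a (F \<union> {m..P})"
      by (intro sum_mono2) (auto simp: F a_nonneg)
    also have "\<dots> = sum a {m..P}"
      using F by (intro sum.mono_neutral_right) (auto simp: m_def above not_le)
    finally show "sum a F \<le> G / (1 - \<rho>)"
      using interval_bound by (rule order_trans)
  qed
qed (simp add: a_nonneg)

text \<open>The coefficients of g are recovered from those of h = (x - z) g by running
  g p = h (p + 1) + z g (p + 1) downwards from the top; for |z| < |x| this is a contraction.\<close>
lemma abs_summable_laurent_if_times_linear: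
  fixes g :: "int \<Rightarrow> complex"
  assumes above: "\<And>p. p > P \<Longrightarrow> g p = 0" and xz: "norm z < norm x"
    and h: "(\<lambda>p. norm ((g (p - 1) - z * g p) * x powi p)) summable_on UNIV"
  shows "(\<lambda>p. norm (g p * x powi p)) summable_on UNIV"
proof (rule summable_on_if_recurrence_bound[where \<rho> = "norm z / norm x"
    and b = "\<lambda>p. norm ((g (p - 1) - z * g p) * x powi p) / norm x"])
  have x: "norm x > 0" using xz by (metis norm_ge_zero le_less_trans)
  show "0 \<le> norm z / norm x" "norm z / norm x < 1"
    using xz x by simp_all
  show "(\<lambda>p. norm ((g (p - 1) - z * g p) * x powi p) / norm x) summable_on UNIV"
    using summable_on_cmult_right[OF h, of "1 / norm x"] by simp
  fix p
  show "norm (g p * x powi p) \<le> norm ((g (p + 1 - 1) - z * g (p + 1)) * x powi (p + 1)) / norm x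
      + norm z / norm x * norm (g (p + 1) * x powi (p + 1))"
  proof -
    have "norm (g p) \<le> norm (g p - z * g (p + 1)) + norm z * norm (g (p + 1))"
      using norm_triangle_ineq[of "g p - z * g (p + 1)" "z * g (p + 1)"] by (simp add: norm_mult)
    then have "norm (g p) * norm x powi p
        \<le> (norm (g p - z * g (p + 1)) + norm z * norm (g (p + 1))) * norm x powi p"
      by (rule mult_right_mono) simp
    moreover have "norm ((g (p + 1 - 1) - z * g (p + 1)) * x powi (p + 1)) / norm x
        = norm (g p - z * g (p + 1)) * norm x powi p"
      using x by (simp add: norm_mult norm_power_int power_int_add)
    moreover have "norm z / norm x * norm (g (p + 1) * x powi (p + 1))
        = norm z * norm (g (p + 1)) * norm x powi p"
      using x by (simp add: norm_mult norm_power_int power_int_add)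
    ultimately show ?thesis
      by (simp add: norm_mult norm_power_int algebra_simps)
  qed
qed (use above in auto)

lemma abs_summable_if_abs_summable_pmul_series:
  fixes f :: "int \<Rightarrow> complex"
  assumes above: "\<And>p. p > P \<Longrightarrow> f p = 0" and xz: "norm z < norm x"
  shows "(\<lambda>p. norm (pmul_series 0 k z f p * x powi p)) summable_on UNIV
    \<Longrightarrow> (\<lambda>p. norm (f p * x powi p)) summable_on UNIV"
proof (induction k)
  case (Suc k)
  have "(\<lambda>p. norm (pmul_series 0 k z f p * x powi p)) summable_on UNIV"
  proof (rule abs_summable_laurent_if_times_linear[OF _ xz])
    show "pmul_series 0 k z f p = 0" if "p > P + int k" for p
      using pmul_series_eq_0_above[OF above] that by simp
    show "(\<lambda>p. norm ((pmul_series 0 k z f (p - 1) - z * pmul_series 0 k z f p) * x powi p))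
        summable_on UNIV"
      using Suc.prems by (simp add: pmul_series_Suc)
  qed
  then show ?case by (rule Suc.IH)
qed simp

section \<open>Uniqueness of expansions at infinity\<close>

lemma norm_laurent_sum_le:
  fixes d :: "int \<Rightarrow> complex"
  assumes below: "\<And>p. p \<ge> m \<Longrightarrow> d p = 0" and s: "0 < s" "s \<le> norm x"
    and summable: "(\<lambda>p. norm (d p * of_real s powi p)) summable_on UNIV"
    and sum: "((\<lambda>p. d p * x powi p) has_sum S) UNIV"
  shows "norm S \<le> infsum (\<lambda>p. norm (d p * of_real s powi p)) UNIV * (norm x / s) powi (m - 1)"
proof (rule norm_infsum_le[OF sum])
  show "((\<lambda>p. norm (d p * of_real s powi p) * (norm x / s) powi (m - 1))
      has_sum infsum (\<lambda>p. norm (d p * of_real s powi p)) UNIV * (norm x / s) powi (m - 1)) UNIV"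
    using summable by (intro has_sum_cmult_left) simp
  show "norm (d p * x powi p) \<le> norm (d p * of_real s powi p) * (norm x / s) powi (m - 1)" for p
  proof (cases "p < m")
    case True
    have "norm x powi p = s powi p * (norm x / s) powi p"
      using s by (simp add: power_int_divide_distrib)
    also have "\<dots> \<le> s powi p * (norm x / s) powi (m - 1)"
      using True s by (intro mult_left_mono power_int_increasing) auto
    finally have "norm (d p) * norm x powi p \<le> norm (d p) * (s powi p * (norm x / s) powi (m - 1))"
      by (rule mult_left_mono) simp
    then show ?thesis
      using s by (simp add: norm_mult norm_power_int mult.assoc)
  qed (simp add: below)
qed

lemma has_sum_drop_top:
  fixes c :: "int \<Rightarrow> complex"
  assumes "\<And>p. p > m \<Longrightarrow> c p = 0" "((\<lambda>p. c p * x powi p) has_sum S) UNIV"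
  shows "((\<lambda>p. (if p < m then c p else 0) * x powi p) has_sum S - c m * x powi m) UNIV"
proof -
  have "((\<lambda>p. if p = m then c m * x powi m else 0) has_sum c m * x powi m) UNIV"
    by (rule has_sum_finite_neutralI[of "{m}"]) auto
  with assms(2) have "((\<lambda>p. c p * x powi p - (if p = m then c m * x powi m else 0))
      has_sum S - c m * x powi m) UNIV"
    unfolding diff_conv_add_uminus by (intro has_sum_add has_sum_uminusI)
  moreover have "(\<lambda>p. c p * x powi p - (if p = m then c m * x powi m else 0))
      = (\<lambda>p. (if p < m then c p else 0) * x powi p)"
    using assms(1) by (auto simp: fun_eq_iff)
  ultimately show ?thesis
    by simp
qed

lemma laurent_top_coeff_eq_0:
  fixes c :: "int \<Rightarrow> complex"
  assumes above: "\<And>p. p > m \<Longrightarrow> c p = 0" and r: "r \<ge> 0"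
    and conv: "\<And>x. norm x > r \<Longrightarrow> (\<lambda>p. norm (c p * x powi p)) summable_on UNIV
                 \<and> ((\<lambda>p. c p * x powi p) has_sum 0) UNIV"
  shows "c m = 0"
proof (rule ccontr)
  assume cm: "c m \<noteq> 0"
  \<comment> \<open>c m x^m is minus the sum of the lower terms, which is O(|x|^(m-1)) as |x| \<rightarrow> \<infinity>.\<close>
  define s where "s = r + 1"
  have s: "s > 0" "s > r" using r by (auto simp: s_def)
  define d where "d p = (if p < m then c p else 0)" for p
  define K where "K = infsum (\<lambda>p. norm (d p * of_real s powi p)) UNIV"
  have d_summable: "(\<lambda>p. norm (d p * of_real s powi p)) summable_on UNIV"
    by (rule summable_on_comparison_test[where f = "\<lambda>p. norm (c p * of_real s powi p)"])
       (use conv[of "of_real s"] s in \<open>auto simp: d_def norm_mult\<close>)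
  have t_bound: "norm (c m) * t \<le> K * s powi (1 - m)" if t: "t \<ge> s" for t :: real
  proof -
    define x where "x = complex_of_real t"
    have nx: "norm x = t" using t s by (simp add: x_def)
    have "((\<lambda>p. d p * x powi p) has_sum 0 - c m * x powi m) UNIV"
      unfolding d_def by (rule has_sum_drop_top) (use above conv[of x] nx t s in auto)
    from norm_laurent_sum_le[OF _ s(1) _ d_summable this] nx t
    have "norm (c m) * t powi m \<le> K * (t / s) powi (m - 1)"
      by (simp add: d_def K_def norm_mult norm_power_int)
    moreover have "t powi m = t * t powi (m - 1)"
      using power_int_add_1[of t "m - 1"] t s by simp
    moreover have "(t / s) powi (m - 1) = t powi (m - 1) * s powi (1 - m)"
      using power_int_minus[of s "m - 1"] by (simp add: power_int_divide_distrib field_simps)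
    ultimately have "(norm (c m) * t) * t powi (m - 1) \<le> (K * s powi (1 - m)) * t powi (m - 1)"
      by (simp add: mult_ac)
    then show ?thesis
      using t s by (simp add: mult_le_cancel_right)
  qed
  have "K \<ge> 0"
    unfolding K_def by (intro infsum_nonneg) auto
  with t_bound[of "s + K * s powi (1 - m) / norm (c m)"] cm s have "norm (c m) * s \<le> 0"
    by (simp add: distrib_left)
  with cm s show False
    by (simp add: mult_le_0_iff)
qed

lemma laurent_coeffs_eq_0:
  fixes c :: "int \<Rightarrow> complex"
  assumes above: "\<And>p. p > P \<Longrightarrow> c p = 0" and r: "r \<ge> 0"
    and conv: "\<And>x. norm x > r \<Longrightarrow> (\<lambda>p. norm (c p * x powi p)) summable_on UNIV
                 \<and> ((\<lambda>p. c p * x powi p) has_sum 0) UNIV"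
  shows "c p = 0"
proof -
  have "\<forall>q > P - int n. c q = 0" for n
  proof (induction n)
    case (Suc n)
    have top: "c (P - int n) = 0"
      by (rule laurent_top_coeff_eq_0[OF _ r conv]) (use Suc in auto)
    show ?case
    proof (intro allI impI)
      fix q assume "q > P - int (Suc n)"
      then consider "q = P - int n" | "q > P - int n" by linarith
      then show "c q = 0" using Suc top by cases auto
    qed
  qed (use above in simp)
  from this[of "nat (P - p + 1)"] show ?thesis by simp
qed

lemma laurent_coeffs_unique:
  fixes f g :: "int \<Rightarrow> complex"
  assumes f_above: "\<And>p. p > P \<Longrightarrow> f p = 0" and g_above: "\<And>p. p > P \<Longrightarrow> g p = 0" and r: "r \<ge> 0"
    and f: "\<And>x. norm x > r \<Longrightarrow> (\<lambda>p. norm (f p * x powi p)) summable_on UNIV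
                 \<and> ((\<lambda>p. f p * x powi p) has_sum S x) UNIV"
    and g: "\<And>x. norm x > r \<Longrightarrow> (\<lambda>p. norm (g p * x powi p)) summable_on UNIV
                 \<and> ((\<lambda>p. g p * x powi p) has_sum S x) UNIV"
  shows "f = g"
proof -
  have "f p - g p = 0" for p
  proof (rule laurent_coeffs_eq_0[OF _ r])
    show "f p - g p = 0" if "p > P" for p
      using that f_above g_above by simp
    fix x :: complex assume x: "norm x > r"
    have "((\<lambda>p. f p * x powi p - g p * x powi p) has_sum (S x - S x)) UNIV"
      using f[OF x] g[OF x] unfolding diff_conv_add_uminus by (intro has_sum_add has_sum_uminusI) auto
    moreover have "(\<lambda>p. norm (f p * x powi p) + norm (g p * x powi p)) summable_on UNIV"
      using f[OF x] g[OF x] by (intro summable_on_add) auto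
    then have "(\<lambda>p. norm ((f p - g p) * x powi p)) summable_on UNIV"
      by (rule summable_on_comparison_test)
         (auto simp: left_diff_distrib intro: norm_triangle_ineq4)
    ultimately show "(\<lambda>p. norm ((f p - g p) * x powi p)) summable_on UNIV
        \<and> ((\<lambda>p. (f p - g p) * x powi p) has_sum 0) UNIV"
      by (simp add: left_diff_distrib)
  qed
  then show ?thesis by auto
qed

section \<open>Polynomials and rational functions with poles at 0 and z\<close>

definition coeff_series :: "complex poly \<Rightarrow> int \<Rightarrow> complex" where
  "coeff_series Q p = (if p \<ge> 0 then coeff Q (nat p) else 0)"

lemma coeff_series_eq_0_above: "p > int (degree Q) \<Longrightarrow> coeff_series Q p = 0"
  by (auto simp: coeff_series_def coeff_eq_0)

lemma coeff_series_support: "{p. coeff_series Q p \<noteq> 0} \<subseteq> int ` {..degree Q}"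
proof
  fix p assume "p \<in> {p. coeff_series Q p \<noteq> 0}"
  then have "p \<ge> 0" "coeff Q (nat p) \<noteq> 0"
    by (auto simp: coeff_series_def split: if_splits)
  then show "p \<in> int ` {..degree Q}"
    using le_degree by (auto simp: image_iff intro!: bexI[of _ "nat p"])
qed

lemma has_sum_coeff_series: "((\<lambda>p. coeff_series Q p * x powi p) has_sum poly Q x) UNIV"
proof (rule has_sum_finite_neutralI[of "int ` {..degree Q}"])
  show "coeff_series Q p * x powi p = 0" if "p \<in> UNIV - int ` {..degree Q}" for p
    using that coeff_series_support[of Q] by auto
  have "poly Q x = (\<Sum>i\<le>degree Q. coeff Q i * x ^ i)"
    by (rule poly_altdef)
  also have "\<dots> = (\<Sum>p\<in>int ` {..degree Q}. coeff_series Q p * x powi p)"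
    by (subst sum.reindex) (auto simp: coeff_series_def)
  finally show "poly Q x = (\<Sum>p\<in>int ` {..degree Q}. coeff_series Q p * x powi p)" .
qed auto

lemma finite_coeff_series_support: "finite {p. coeff_series Q p \<noteq> 0}"
  using coeff_series_support by (rule finite_subset) simp

lemma abs_summable_coeff_series: "(\<lambda>p. norm (coeff_series Q p * x powi p)) summable_on UNIV"
  by (rule finite_nonzero_values_imp_summable_on)
     (auto intro: finite_subset[OF _ finite_coeff_series_support])

lemma is_polynomial_series_iff_coeff_series:
  "is_polynomial_series h \<longleftrightarrow> (\<exists>Q. h = coeff_series Q)"
proof
  assume h: "is_polynomial_series h"
  define D where "D = Max (insert 0 {p. h p \<noteq> 0})"
  have D: "p \<le> D" if "h p \<noteq> 0" for p
    unfolding D_def using h that by (intro Max_ge) (auto simp: is_polynomial_series_def)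
  define Q where "Q = Poly (map (\<lambda>i. h (int i)) [0..<Suc (nat D)])"
  have "h p = coeff_series Q p" for p
  proof (cases "p \<ge> 0")
    case False
    then show ?thesis using h by (simp add: coeff_series_def is_polynomial_series_def)
  next
    case True
    show ?thesis
    proof (cases "nat p < Suc (nat D)")
      case True
      then show ?thesis
        using \<open>p \<ge> 0\<close> by (simp add: coeff_series_def Q_def nth_default_def del: upt_Suc)
    next
      case False
      then have "h p = 0"
        using D[of p] \<open>p \<ge> 0\<close> by linarith
      then show ?thesis
        using False \<open>p \<ge> 0\<close> by (simp add: coeff_series_def Q_def nth_default_def)
    qed
  qed
  then show "\<exists>Q. h = coeff_series Q" by blast
next
  assume "\<exists>Q. h = coeff_series Q"
  then obtain Q where "h = coeff_series Q" ..
  then show "is_polynomial_series h"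
    unfolding is_polynomial_series_def using finite_coeff_series_support[of Q]
    by (simp add: coeff_series_def)
qed

lemma pole_order_le_if_eq_divide_power:
  assumes "isCont h c" and "\<forall>\<^sub>F x in at c. R x = h x / (x - c) ^ n"
  shows "pole_order_le R c n"
  unfolding pole_order_le_def
proof
  show "((\<lambda>x. (x - c) ^ n * R x) \<longlongrightarrow> h c) (at c)"
  proof (rule Lim_transform_eventually)
    show "(h \<longlongrightarrow> h c) (at c)"
      using assms(1) by (simp add: isCont_def)
    show "\<forall>\<^sub>F x in at c. h x = (x - c) ^ n * R x"
      using assms(2) eventually_neq_at_within[of c c UNIV] by eventually_elim simp
  qed
qed

lemma pole_order_le_imp_exponent_le:
  assumes "pole_order_le R c A" and "isCont g c" "g c \<noteq> 0"
    and R: "\<forall>\<^sub>F x in at c. R x = (x - c) ^ m * g x / (x - c) ^ a"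
  shows "a \<le> A + m"
proof (rule ccontr)
  assume "\<not> a \<le> A + m"
  define e where "e = a - (A + m)"
  have e: "e > 0" "a = e + A + m"
    using \<open>\<not> a \<le> A + m\<close> by (auto simp: e_def)
  obtain L where L: "((\<lambda>x. (x - c) ^ A * R x) \<longlongrightarrow> L) (at c)"
    using assms(1) unfolding pole_order_le_def by blast
  have "((\<lambda>x. (x - c) ^ e * ((x - c) ^ A * R x)) \<longlongrightarrow> (c - c) ^ e * L) (at c)"
    by (intro tendsto_intros L)
  then have "((\<lambda>x. (x - c) ^ e * ((x - c) ^ A * R x)) \<longlongrightarrow> 0) (at c)"
    using e by (simp add: zero_power)
  moreover have "\<forall>\<^sub>F x in at c. (x - c) ^ e * ((x - c) ^ A * R x) = g x"
    using R eventually_neq_at_within[of c c UNIV]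
    by eventually_elim (simp add: e(2) power_add field_simps)
  ultimately have "(g \<longlongrightarrow> 0) (at c)"
    by (rule Lim_transform_eventually)
  moreover have "(g \<longlongrightarrow> g c) (at c)"
    using assms(2) by (simp add: isCont_def)
  ultimately show False
    using assms(3) tendsto_unique[OF at_neq_bot] by blast
qed

lemma poly_factor_roots_0_z:
  fixes q :: "complex poly"
  assumes "q \<noteq> 0" "z \<noteq> 0"
  obtains m n q' where "\<And>x. poly q x = x ^ m * (x - z) ^ n * poly q' x"
    and "poly q' 0 \<noteq> 0" "poly q' z \<noteq> 0"
proof -
  obtain q1 where q1: "q = [:- 0, 1:] ^ order 0 q * q1" "\<not> [:- 0, 1:] dvd q1"
    using order_decomp[OF assms(1)] by blast
  then have "q1 \<noteq> 0" by auto
  obtain q2 where q2: "q1 = [:- z, 1:] ^ order z q1 * q2" "\<not> [:- z, 1:] dvd q2"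
    using order_decomp[OF \<open>q1 \<noteq> 0\<close>] by blast
  have "poly q1 0 \<noteq> 0"
    using q1(2) poly_eq_0_iff_dvd[of q1 0] by simp
  then have "poly q2 0 \<noteq> 0"
    by (subst (asm) q2(1)) simp
  moreover have "poly q2 z \<noteq> 0"
    using q2(2) poly_eq_0_iff_dvd[of q2 z] by simp
  moreover have "poly q x = x ^ order 0 q * (x - z) ^ order z q1 * poly q2 x" for x
    by (subst q1(1), subst q2(1)) (simp add: poly_power)
  ultimately show ?thesis using that by blast
qed

lemma rat_0z_times_poles_eq_poly:
  assumes "z \<noteq> 0" and "rat_0z z R" and "pole_order_le R 0 A" "pole_order_le R z B"
  obtains Q where "\<And>x. x \<noteq> 0 \<Longrightarrow> x \<noteq> z \<Longrightarrow> x ^ A * (x - z) ^ B * R x = poly Q x"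
proof -
  obtain q a b where R: "\<And>x. x \<noteq> 0 \<Longrightarrow> x \<noteq> z \<Longrightarrow> R x = poly q x / (x ^ a * (x - z) ^ b)"
    using assms(2) unfolding rat_0z_def by blast
  show ?thesis
  proof (cases "q = 0")
    case True
    then show ?thesis using that[of 0] by (simp add: R)
  next
    case False
    obtain m n q' where q: "\<And>x. poly q x = x ^ m * (x - z) ^ n * poly q' x"
      and q'0: "poly q' 0 \<noteq> 0" and q'z: "poly q' z \<noteq> 0"
      using poly_factor_roots_0_z[OF False assms(1)] by blast
    have near_0_z: "\<forall>\<^sub>F x in at c. x \<noteq> 0 \<and> x \<noteq> z" for c
      using eventually_neq_at_within[of 0 c UNIV] eventually_neq_at_within[of z c UNIV]
      by eventually_elim simp
    have "a \<le> A + m"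
    proof (rule pole_order_le_imp_exponent_le[OF assms(3)])
      show "isCont (\<lambda>x. (x - z) ^ n * poly q' x / (x - z) ^ b) 0"
        using assms(1) by (intro continuous_intros) auto
      show "\<forall>\<^sub>F x in at 0. R x = (x - 0) ^ m * ((x - z) ^ n * poly q' x / (x - z) ^ b) / (x - 0) ^ a"
        using near_0_z by eventually_elim (simp add: R q mult_ac)
    qed (use assms(1) q'0 in simp)
    moreover have "b \<le> B + n"
    proof (rule pole_order_le_imp_exponent_le[OF assms(4)])
      show "isCont (\<lambda>x. x ^ m * poly q' x / x ^ a) z"
        using assms(1) by (intro continuous_intros) auto
      show "\<forall>\<^sub>F x in at z. R x = (x - z) ^ n * (x ^ m * poly q' x / x ^ a) / (x - z) ^ b"
        using near_0_z by eventually_elim (simp add: R q field_simps)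
    qed (use assms(1) q'z in simp)
    ultimately obtain e1 e2 where e: "A + m = a + e1" "B + n = b + e2"
      by (metis le_add_diff_inverse)
    have "x ^ A * (x - z) ^ B * R x = poly ([:0, 1:] ^ e1 * [:- z, 1:] ^ e2 * q') x"
      if x: "x \<noteq> 0" "x \<noteq> z" for x
    proof -
      have "x ^ A * (x - z) ^ B * R x = x ^ (A + m) * (x - z) ^ (B + n) * poly q' x / (x ^ a * (x - z) ^ b)"
        using x by (simp add: R q power_add)
      also have "\<dots> = x ^ e1 * (x - z) ^ e2 * poly q' x"
        unfolding e using x by (simp add: power_add field_simps)
      finally show ?thesis
        by (simp add: poly_power)
    qed
    then show ?thesis using that by blast
  qed
qed

lemma is_polynomial_series_pmul_series_if_rational:
  fixes f :: "int \<Rightarrow> complex"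
  assumes above: "\<And>p. p > P \<Longrightarrow> f p = 0" and z: "z \<noteq> 0"
    and conv: "conv_abs_to z f R" and rat: "rat_0z z R"
    and poles: "pole_order_le R 0 A" "pole_order_le R z B"
  shows "is_polynomial_series (pmul_series A B z f)"
proof -
  obtain Q where Q: "\<And>x. x \<noteq> 0 \<Longrightarrow> x \<noteq> z \<Longrightarrow> x ^ A * (x - z) ^ B * R x = poly Q x"
    using rat_0z_times_poles_eq_poly[OF z rat poles] by blast
  have "pmul_series A B z f = coeff_series Q"
  proof (rule laurent_coeffs_unique[where P = "max (P + int A + int B) (int (degree Q))"
        and r = "norm z" and S = "poly Q"])
    show "pmul_series A B z f p = 0" if "p > max (P + int A + int B) (int (degree Q))" for p
      using that above by (intro pmul_series_eq_0_above) auto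
    show "coeff_series Q p = 0" if "p > max (P + int A + int B) (int (degree Q))" for p
      using that by (intro coeff_series_eq_0_above) auto
    fix x :: complex assume x: "norm x > norm z"
    then have "x \<noteq> 0" "x \<noteq> z" by auto
    then show "(\<lambda>p. norm (pmul_series A B z f p * x powi p)) summable_on UNIV
        \<and> ((\<lambda>p. pmul_series A B z f p * x powi p) has_sum poly Q x) UNIV"
      using conv x has_sum_pmul_series[of f x "R x" A B z] abs_summable_pmul_series[of f x A B z] Q
      unfolding conv_abs_to_def by auto
  qed (auto intro: has_sum_coeff_series abs_summable_coeff_series)
  then show ?thesis
    by (auto simp: is_polynomial_series_iff_coeff_series)
qed

lemma rational_sum_if_pmul_series_eq_coeff_series:
  fixes f :: "int \<Rightarrow> complex"
  assumes above: "\<And>p. p > P \<Longrightarrow> f p = 0" and z: "z \<noteq> 0"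
    and Q: "pmul_series l k z f = coeff_series Q"
  defines "R \<equiv> \<lambda>x. poly Q x / (x ^ l * (x - z) ^ k)"
  shows "conv_abs_to z f R \<and> rat_0z z R \<and> pole_order_le R 0 l \<and> pole_order_le R z k"
proof (intro conjI)
  show "conv_abs_to z f R"
    unfolding conv_abs_to_def
  proof (intro allI impI conjI)
    fix x :: complex assume x: "norm z < norm x"
    then have x0: "x \<noteq> 0" and xz: "x \<noteq> z" by auto
    have shift: "pmul_series 0 k z f p = coeff_series Q (p - - int l)" for p
      using pmul_series_shift[of l k z f "p + int l"] Q by simp
    have "(\<lambda>p. norm (pmul_series 0 k z f p * x powi p)) summable_on UNIV"
      unfolding shift by (rule abs_summable_laurent_shift[OF abs_summable_coeff_series x0])
    with above x show summable: "(\<lambda>p. norm (f p * x powi p)) summable_on UNIV"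
      by (rule abs_summable_if_abs_summable_pmul_series)
    obtain S where S: "((\<lambda>p. f p * x powi p) has_sum S) UNIV"
      using abs_summable_summable[OF summable] by (auto simp: summable_on_def)
    have "((\<lambda>p. coeff_series Q p * x powi p) has_sum (x ^ l * (x - z) ^ k * S)) UNIV"
      using has_sum_pmul_series[OF S x0, of l k z] Q by simp
    then have "x ^ l * (x - z) ^ k * S = poly Q x"
      using has_sum_coeff_series by (rule has_sum_unique)
    then have "S = R x"
      using x0 xz by (simp add: R_def field_simps)
    then show "((\<lambda>p. f p * x powi p) has_sum R x) UNIV"
      using S by simp
  qed
  show "rat_0z z R"
    unfolding rat_0z_def R_def by blast
  show "pole_order_le R 0 l"
    by (rule pole_order_le_if_eq_divide_power[where h = "\<lambda>x. poly Q x / (x - z) ^ k"])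
       (use z in \<open>auto intro!: continuous_intros always_eventually simp: R_def\<close>)
  show "pole_order_le R z k"
    by (rule pole_order_le_if_eq_divide_power[where h = "\<lambda>x. poly Q x / x ^ l"])
       (use z in \<open>auto intro!: continuous_intros always_eventually simp: R_def mult.commute\<close>)
qed

lemma is_polynomial_series_iff_vanishing_below:
  assumes "\<And>p. p > P \<Longrightarrow> h p = 0"
  shows "is_polynomial_series h \<longleftrightarrow> (\<forall>p<0. h p = 0)"
proof -
  have "{p. h p \<noteq> 0} \<subseteq> {0..P}" if "\<forall>p<0. h p = 0"
    using that assms by (auto simp: not_less) (meson not_le)+
  then show ?thesis
    unfolding is_polynomial_series_def by (auto intro: finite_subset)
qed

section \<open>Vertex operator algebras and the opposite vertex operator\<close>

lemma
  assumes "is_VOA sV Y vac om"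
  shows is_VOA_vector_space: "vector_space sV"
    and is_VOA_linear: "Vector_Spaces.linear sV sV (Y u n)"
    and is_VOA_graded: "\<exists>c::int \<Rightarrow> _. finite {n. c n \<noteq> 0} \<and> (\<forall>n. c n \<in> hom_space sV Y om n)
                          \<and> v = sum c {n. c n \<noteq> 0}"
    and is_VOA_lower_bounded: "\<exists>N. \<forall>n<N. hom_space sV Y om n = {0}"
  using assms unfolding is_VOA_def by (elim conjE; simp)+

lemma is_VOA_L0_L1_commutator:
  assumes "is_VOA sV Y vac om"
  shows "Lop Y om 0 (Lop Y om 1 v) - Lop Y om 1 (Lop Y om 0 v) = sV (-1) (Lop Y om 1 v)"
proof -
  obtain c :: complex where "\<forall>m n v.
        Lop Y om m (Lop Y om n v) - Lop Y om n (Lop Y om m v)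
        = sV (of_int (m - n)) (Lop Y om (m + n) v)
          + (if m + n = 0 then sV ((of_int m ^ 3 - of_int m) / 12 * c) v else 0)"
    using assms unfolding is_VOA_def by (elim conjE exE) assumption
  from this[rule_format, of 0 1 v] show ?thesis by simp
qed

lemma
  assumes "is_weak_module sV Y vac sW YW"
  shows is_weak_module_linear_left: "Vector_Spaces.linear sV sW (\<lambda>v. YW v n w)"
    and is_weak_module_truncated: "\<exists>N. \<forall>n>N. YW v n w = 0"
  using assms unfolding is_weak_module_def by (elim conjE; simp)+

lemma eigenvectors_sum_eq_0_imp_eq_0:
  fixes scale :: "'a::field \<Rightarrow> 'v::ab_group_add \<Rightarrow> 'v"
  assumes vs: "vector_space scale" and L: "Vector_Spaces.linear scale scale L"
  shows "finite S \<Longrightarrow> inj_on \<mu> S \<Longrightarrow> (\<And>i. i \<in> S \<Longrightarrow> L (d i) = scale (\<mu> i) (d i))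
    \<Longrightarrow> sum d S = 0 \<Longrightarrow> i \<in> S \<Longrightarrow> d i = 0"
proof (induction S arbitrary: d i rule: finite_induct)
  case (insert m S)
  interpret vector_space scale
    by (rule vs)
  interpret L: module_hom scale scale L
    using L by (simp add: module_hom_iff_linear)
  have dm: "d m = - sum d S"
    using insert.prems(3) insert.hyps by (simp add: add_eq_0_iff)
  \<comment> \<open>Applying L - \<mu> m kills d m and rescales the other summands by nonzero factors.\<close>
  define d' where "d' i = scale (\<mu> i - \<mu> m) (d i)" for i
  have "sum d' S = sum (\<lambda>i. L (d i)) S - scale (\<mu> m) (sum d S)"
    using insert.prems(2) by (simp add: d'_def scale_left_diff_distrib sum_subtractf scale_sum_right)
  also have "\<dots> = - (L (d m) - scale (\<mu> m) (d m))"
    by (simp add: dm L.sum L.neg)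
  also have "\<dots> = 0"
    using insert.prems(2) by simp
  finally have sum_d': "sum d' S = 0" .
  have inj: "inj_on \<mu> S"
    using insert.prems(1) by (simp add: inj_on_insert)
  have eigen: "L (d' i) = scale (\<mu> i) (d' i)" if "i \<in> S" for i
    using insert.prems(2)[of i] that by (simp add: d'_def L.scale mult.commute)
  have "d' j = 0" if "j \<in> S" for j
    using inj eigen sum_d' that by (rule insert.IH)
  then have dS: "d j = 0" if "j \<in> S" for j
    using that insert.hyps insert.prems(1) by (auto simp: d'_def inj_on_def)
  then show ?case
    using insert.prems(4) dm by auto
qed simp

lemma homogeneous_decomposition_unique:
  assumes voa: "is_VOA sV Y vac om"
    and c1: "finite {n. c1 n \<noteq> 0}" "\<forall>n. c1 n \<in> hom_space sV Y om n" "v = sum c1 {n. c1 n \<noteq> 0}"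
    and c2: "finite {n. c2 n \<noteq> 0}" "\<forall>n. c2 n \<in> hom_space sV Y om n" "v = sum c2 {n. c2 n \<noteq> 0}"
  shows "c1 = c2"
proof
  fix n
  interpret vector_space sV
    by (rule is_VOA_vector_space[OF voa])
  have L0: "Vector_Spaces.linear sV sV (Lop Y om 0)"
    unfolding Lop_def by (rule is_VOA_linear[OF voa])
  interpret L0: module_hom sV sV "Lop Y om 0"
    using L0 by (simp add: module_hom_iff_linear)
  define S where "S = {n. c1 n \<noteq> 0} \<union> {n. c2 n \<noteq> 0}"
  have "finite S"
    using c1 c2 by (simp add: S_def)
  have "sum c1 S = sum c1 {n. c1 n \<noteq> 0}" "sum c2 S = sum c2 {n. c2 n \<noteq> 0}"
    using \<open>finite S\<close> by (auto simp: S_def intro: sum.mono_neutral_right)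
  then have "sum c1 S = v" "sum c2 S = v"
    using c1(3) c2(3) by simp_all
  then have sum_diff: "sum (\<lambda>n. c1 n - c2 n) S = 0"
    by (simp add: sum_subtractf)
  have eigen_diff: "Lop Y om 0 (c1 n - c2 n) = sV (of_int n) (c1 n - c2 n)" for n
    using c1(2) c2(2) by (simp add: hom_space_def L0.diff scale_right_diff_distrib)
  have "c1 n - c2 n = 0" if "n \<in> S"
    using eigenvectors_sum_eq_0_imp_eq_0[OF is_VOA_vector_space[OF voa] L0 \<open>finite S\<close>,
        where \<mu> = of_int and d = "\<lambda>n. c1 n - c2 n"] eigen_diff sum_diff that
    by (simp add: inj_on_def)
  then show "c1 n = c2 n"
    by (cases "n \<in> S") (auto simp: S_def)
qed

lemma
  assumes "is_VOA sV Y vac om"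
  shows finite_hom_comp_support: "finite {n. hom_comp sV Y om v n \<noteq> 0}"
    and hom_comp_mem_hom_space: "hom_comp sV Y om v n \<in> hom_space sV Y om n"
proof -
  let ?dec = "\<lambda>c. finite {n. c n \<noteq> 0} \<and> (\<forall>n. c n \<in> hom_space sV Y om n) \<and> v = sum c {n. c n \<noteq> 0}"
  have "\<exists>!c. ?dec c"
    using is_VOA_graded[OF assms] homogeneous_decomposition_unique[OF assms] by metis
  then have "?dec (hom_comp sV Y om v)"
    unfolding hom_comp_def by (rule theI')
  then show "finite {n. hom_comp sV Y om v n \<noteq> 0}" "hom_comp sV Y om v n \<in> hom_space sV Y om n"
    by auto
qed

lemma L1_power_mem_hom_space:
  assumes voa: "is_VOA sV Y vac om" and u: "u \<in> hom_space sV Y om n"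
  shows "(Lop Y om 1 ^^ j) u \<in> hom_space sV Y om (n - int j)"
proof (induction j)
  case (Suc j)
  interpret vector_space sV
    by (rule is_VOA_vector_space[OF voa])
  interpret L1: module_hom sV sV "Lop Y om 1"
    unfolding Lop_def using is_VOA_linear[OF voa] by (simp add: module_hom_iff_linear)
  define x where "x = (Lop Y om 1 ^^ j) u"
  have x: "Lop Y om 0 x = sV (of_int (n - int j)) x"
    using Suc by (simp add: hom_space_def x_def)
  have "Lop Y om 0 (Lop Y om 1 x) = Lop Y om 1 (Lop Y om 0 x) + sV (-1) (Lop Y om 1 x)"
    using is_VOA_L0_L1_commutator[OF voa, of x] by (simp add: algebra_simps)
  also have "\<dots> = sV (of_int (n - int j)) (Lop Y om 1 x) + sV (-1) (Lop Y om 1 x)"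
    by (simp only: x L1.scale)
  also have "\<dots> = sV (of_int (n - int (Suc j))) (Lop Y om 1 x)"
    by (simp only: scale_left_distrib[symmetric]) simp
  finally show ?case
    by (simp add: hom_space_def x_def)
qed (use u in simp)

lemma finite_nonzero_L1_powers_hom_comp:
  assumes voa: "is_VOA sV Y vac om"
  shows "finite {(n, j). (Lop Y om 1 ^^ j) (hom_comp sV Y om v n) \<noteq> 0}"
proof -
  interpret V: vector_space sV
    by (rule is_VOA_vector_space[OF voa])
  interpret L1: module_hom sV sV "Lop Y om 1"
    unfolding Lop_def using is_VOA_linear[OF voa] by (simp add: module_hom_iff_linear)
  obtain N where N: "\<And>n. n < N \<Longrightarrow> hom_space sV Y om n = {0}"
    using is_VOA_lower_bounded[OF voa] by blast
  let ?c = "hom_comp sV Y om v"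
  have "(n, j) \<in> Sigma {n. ?c n \<noteq> 0} (\<lambda>n. {..nat (n - N)})"
    if nonzero: "(Lop Y om 1 ^^ j) (?c n) \<noteq> 0" for n j
  proof -
    have "(Lop Y om 1 ^^ j) 0 = 0" for j
      by (induction j) simp_all
    then have "?c n \<noteq> 0"
      using nonzero by auto
    moreover have "n - int j \<ge> N"
    proof (rule ccontr)
      assume "\<not> N \<le> n - int j"
      then have "hom_space sV Y om (n - int j) = {0}"
        using N by simp
      then show False
        using nonzero L1_power_mem_hom_space[OF voa hom_comp_mem_hom_space[OF voa, of v n], of j]
        by simp
    qed
    ultimately show ?thesis
      by simp
  qed
  then have "{(n, j). (Lop Y om 1 ^^ j) (?c n) \<noteq> 0} \<subseteq> Sigma {n. ?c n \<noteq> 0} (\<lambda>n. {..nat (n - N)})"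
    by blast
  moreover have "finite (Sigma {n. ?c n \<noteq> 0} (\<lambda>n. {..nat (n - N)}))"
    using finite_hom_comp_support[OF voa] by (intro finite_SigmaI) auto
  ultimately show ?thesis
    by (rule finite_subset)
qed

text \<open>Each summand of Yo is a mode of some L(1)^j v_(n) applied to w; only finitely many of these
  vectors are nonzero, and each has only finitely many nonzero modes on w.\<close>
lemma Yo_eq_0_above:
  assumes voa: "is_VOA sV Y vac om" and wm: "is_weak_module sV Y vac sW YW"
  shows "\<exists>P. \<forall>p>P. Yo sV Y om sW YW v p w = 0"
proof -
  interpret W: vector_space sW
    using wm by (simp add: is_weak_module_def)
  have YW_0: "YW 0 m w = 0" for m
    using is_weak_module_linear_left[OF wm, of m w] module_hom.zero[of sV sW "\<lambda>v. YW v m w"]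
    by (simp add: module_hom_iff_linear)
  define u where "u n j = (Lop Y om 1 ^^ j) (hom_comp sV Y om v n)" for n j
  define T where "T = {(n, j). u n j \<noteq> 0}"
  have "finite T"
    unfolding T_def u_def by (rule finite_nonzero_L1_powers_hom_comp[OF voa])
  define PP where "PP n j = (SOME P. \<forall>m>P. YW (u n j) m w = 0)" for n j
  have PP: "YW (u n j) m w = 0" if "m > PP n j" for n j m
    using someI_ex[OF is_weak_module_truncated[OF wm, of "u n j" w]] that by (simp add: PP_def)
  obtain B where B: "\<And>t. t \<in> T \<Longrightarrow> PP (fst t) (snd t) - 2 * fst t + int (snd t) + 1 \<le> B"
    using bdd_above_finite[OF finite_imageI[OF \<open>finite T\<close>,
        of "\<lambda>t. PP (fst t) (snd t) - 2 * fst t + int (snd t) + 1"]]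
    unfolding bdd_above_def by auto
  have "Yo sV Y om sW YW v p w = 0" if "p > B" for p
  proof -
    have "YW (u n j) (p + 2 * n - int j - 1) w = 0" for n j
    proof (cases "u n j = 0")
      case False
      then have "PP n j < p + 2 * n - int j - 1"
        using B[of "(n, j)"] that by (simp add: T_def)
      then show ?thesis
        by (rule PP)
    qed (simp add: YW_0)
    then show ?thesis
      unfolding Yo_def fsum_def u_def by simp
  qed
  then show ?thesis by blast
qed

lemma Yo_pairing_eq_0_above:
  assumes "is_VOA sV Y vac om" "is_weak_module sV Y vac sW YW" "Vector_Spaces.linear sW (*) \<alpha>"
  shows "\<exists>P. \<forall>p>P. \<alpha> (Yo sV Y om sW YW v p w) = 0"
proof -
  obtain P where "\<forall>p>P. Yo sV Y om sW YW v p w = 0"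
    using Yo_eq_0_above[OF assms(1,2)] by blast
  moreover have "\<alpha> 0 = 0"
    using assms(3) by (simp add: module_hom_iff_linear[symmetric] module_hom.zero)
  ultimately have "\<forall>p>P. \<alpha> (Yo sV Y om sW YW v p w) = 0"
    by simp
  then show ?thesis ..
qed

section \<open>The conditions (a) to (d)\<close>

lemma pmul_dual_Ystar_eq_0_iff:
  "pmul_dual l k z (Ystar sV Y om sW YW v \<alpha>) p = (\<lambda>_. 0) \<longleftrightarrow>
   (\<forall>w. pmul_series l k z (\<lambda>q. \<alpha> (Yo sV Y om sW YW v q w)) p = 0)"
  by (simp add: pmul_dual_def Ystar_def fun_eq_iff)

lemma rational_bounds_iff_pmul_series_polynomial:
  fixes F :: "'w \<Rightarrow> int \<Rightarrow> complex"
  assumes above: "\<And>w. \<exists>P. \<forall>p>P. F w p = 0" and z: "z \<noteq> 0"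
  shows "(\<exists>A B. \<forall>w. \<exists>R. conv_abs_to z (F w) R \<and> rat_0z z R \<and> pole_order_le R 0 A \<and> pole_order_le R z B)
     \<longleftrightarrow> (\<exists>l k. \<forall>w. is_polynomial_series (pmul_series l k z (F w)))"
proof
  assume "\<exists>A B. \<forall>w. \<exists>R. conv_abs_to z (F w) R \<and> rat_0z z R \<and> pole_order_le R 0 A \<and> pole_order_le R z B"
  then obtain A B where AB: "\<forall>w. \<exists>R. conv_abs_to z (F w) R \<and> rat_0z z R \<and> pole_order_le R 0 A \<and> pole_order_le R z B"
    by blast
  have "is_polynomial_series (pmul_series A B z (F w))" for w
  proof -
    obtain P where "\<forall>p>P. F w p = 0"
      using above by blast
    moreover obtain R where "conv_abs_to z (F w) R" "rat_0z z R" "pole_order_le R 0 A" "pole_order_le R z B"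
      using AB by blast
    ultimately show ?thesis
      using z by (intro is_polynomial_series_pmul_series_if_rational[of P]) auto
  qed
  then show "\<exists>l k. \<forall>w. is_polynomial_series (pmul_series l k z (F w))"
    by blast
next
  assume "\<exists>l k. \<forall>w. is_polynomial_series (pmul_series l k z (F w))"
  then obtain l k where lk: "\<forall>w. \<exists>Q. pmul_series l k z (F w) = coeff_series Q"
    by (auto simp: is_polynomial_series_iff_coeff_series)
  have "\<exists>R. conv_abs_to z (F w) R \<and> rat_0z z R \<and> pole_order_le R 0 l \<and> pole_order_le R z k" for w
  proof -
    obtain P where "\<forall>p>P. F w p = 0"
      using above by blast
    moreover obtain Q where "pmul_series l k z (F w) = coeff_series Q"
      using lk by blast
    ultimately show ?thesis
      using z rational_sum_if_pmul_series_eq_coeff_series[of P "F w" z l k Q] by auto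
  qed
  then show "\<exists>A B. \<forall>w. \<exists>R. conv_abs_to z (F w) R \<and> rat_0z z R \<and> pole_order_le R 0 A \<and> pole_order_le R z B"
    by blast
qed

lemma ex_pmul_series_vanishing_below_iff:
  "(\<exists>l k. \<forall>p<0. \<forall>w. pmul_series l k z (F w) p = 0)
   \<longleftrightarrow> (\<exists>k N. \<forall>p<N. \<forall>w. pmul_series 0 k z (F w) p = 0)"
proof
  assume "\<exists>l k. \<forall>p<0. \<forall>w. pmul_series l k z (F w) p = 0"
  then obtain l k where lk: "\<forall>p<0. \<forall>w. pmul_series l k z (F w) p = 0"
    by blast
  have "\<forall>p < - int l. \<forall>w. pmul_series 0 k z (F w) p = 0"
  proof (intro allI impI)
    fix p w assume "p < - int l"
    then show "pmul_series 0 k z (F w) p = 0"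
      using lk pmul_series_shift[of l k z "F w" "p + int l"] by simp
  qed
  then show "\<exists>k N. \<forall>p<N. \<forall>w. pmul_series 0 k z (F w) p = 0"
    by blast
next
  assume "\<exists>k N. \<forall>p<N. \<forall>w. pmul_series 0 k z (F w) p = 0"
  then obtain k N where N: "\<forall>p<N. \<forall>w. pmul_series 0 k z (F w) p = 0"
    by blast
  then have "\<forall>p<0. \<forall>w. pmul_series (nat (- N)) k z (F w) p = 0"
    by (auto simp: pmul_series_shift[of "nat (- N)"])
  then show "\<exists>l k. \<forall>p<0. \<forall>w. pmul_series l k z (F w) p = 0"
    by blast
qed

lemma all_polynomial_series_pmul_series_iff:
  fixes F :: "'w \<Rightarrow> int \<Rightarrow> complex"
  assumes above: "\<And>w. \<exists>P. \<forall>p>P. F w p = 0"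
  shows "(\<forall>w. is_polynomial_series (pmul_series l k z (F w)))
    \<longleftrightarrow> (\<forall>p<0. \<forall>w. pmul_series l k z (F w) p = 0)"
proof -
  have "is_polynomial_series (pmul_series l k z (F w)) \<longleftrightarrow> (\<forall>p<0. pmul_series l k z (F w) p = 0)" for w
  proof -
    obtain P where "\<forall>p>P. F w p = 0"
      using above by blast
    then show ?thesis
      by (intro is_polynomial_series_iff_vanishing_below[of "P + int l + int k"])
         (rule pmul_series_eq_0_above, auto)
  qed
  then show ?thesis
    by blast
qed

theorem lemma3p4:
  fixes sV :: "complex \<Rightarrow> 'v \<Rightarrow> 'v::ab_group_add" and Y :: "'v \<Rightarrow> int \<Rightarrow> 'v \<Rightarrow> 'v"
    and vac om :: 'v
    and sW :: "complex \<Rightarrow> 'w \<Rightarrow> 'w::ab_group_add" and YW :: "'v \<Rightarrow> int \<Rightarrow> 'w \<Rightarrow> 'w"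
    and z :: complex and \<alpha> :: "'w \<Rightarrow> complex"
  assumes "is_VOA sV Y vac om"
    and "is_weak_module sV Y vac sW YW"
    and "z \<noteq> 0"
    and "Vector_Spaces.linear sW (*) \<alpha>"
  shows "(is_Pz_linear sV Y om sW YW z \<alpha>
          \<longleftrightarrow> (\<forall>v. \<exists>l k. \<forall>w. is_polynomial_series
                 (pmul_series l k z (\<lambda>p. \<alpha> (Yo sV Y om sW YW v p w)))))
       \<and> ((\<forall>v. \<exists>l k. \<forall>w. is_polynomial_series
                 (pmul_series l k z (\<lambda>p. \<alpha> (Yo sV Y om sW YW v p w))))
          \<longleftrightarrow> (\<forall>v. \<exists>l k. \<forall>p<0. pmul_dual l k z (Ystar sV Y om sW YW v \<alpha>) p = (\<lambda>_. 0)))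
       \<and> ((\<forall>v. \<exists>l k. \<forall>p<0. pmul_dual l k z (Ystar sV Y om sW YW v \<alpha>) p = (\<lambda>_. 0))
          \<longleftrightarrow> (\<forall>v. \<exists>k N. \<forall>p<N. pmul_dual 0 k z (Ystar sV Y om sW YW v \<alpha>) p = (\<lambda>_. 0)))"
proof -
  define F where "F v w = (\<lambda>p. \<alpha> (Yo sV Y om sW YW v p w))" for v w
  have above: "\<exists>P. \<forall>p>P. F v w p = 0" for v w
    unfolding F_def by (rule Yo_pairing_eq_0_above[OF assms(1,2,4)])
  show ?thesis
    unfolding is_Pz_linear_def pmul_dual_Ystar_eq_0_iff F_def[symmetric]
      rational_bounds_iff_pmul_series_polynomial[OF above assms(3)]
      all_polynomial_series_pmul_series_iff[OF above] ex_pmul_series_vanishing_below_iff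
    using assms(4) by blast
qed

end
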